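(* For a definable set $X\subseteq Z^m\times R^n$ the following are equivalent: (1) $X$ is $Z$-internal; (2) the projection of $X$ on the $R$-coordinates (i.e. onto $R^n$) is finite; (3) there is a definable bijection from $X$ to a definable subset of $Z^{m+1}$.
   Context: Let $\mathfrak C$ be a monster model, $Z,R$ definable subsets of $\mathfrak C$ which are stably embedded (subsets of $Z^n$, resp. $R^n$, definable with parameters from $\mathfrak C$ are definable with parameters from $Z$, resp. $R$) and fully orthogonal (for all $m,n$, every definable subset of $Z^m\times R^n$ is a finite union of sets $U\times V$ with $U\subseteq Z^m$, $V\subseteq R^n$ definable). "Definable" means definable in $(Z,R)^{eq}$ (the two-sorted structure $(Z,R)$ with no connection between the sorts, expanded by imaginary sorts) with parameters from the monster model. A definable set $X$ is $Z$-internal if there is a definable surjection from $Z^k$ onto $X$ for some $k$. *)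

theory Defs
  imports Main
begin

text \<open>Points of Z^a x R^b are pairs (zs, rs) of lists, zs of length a with entries
in Z and rs of length b with entries in R.\<close>

definition sp :: "'z set \<Rightarrow> 'r set \<Rightarrow> nat \<Rightarrow> nat \<Rightarrow> ('z list \<times> 'r list) set" where
  "sp Z R a b = {(zs, rs). length zs = a \<and> set zs \<subseteq> Z \<and> length rs = b \<and> set rs \<subseteq> R}"

text \<open>Product U x V of U subset Z^a (as subset of Z^a x R^0) and V subset R^b
(as subset of Z^0 x R^b).\<close>

definition rect :: "('z list \<times> 'r list) set \<Rightarrow> ('z list \<times> 'r list) set \<Rightarrow> ('z list \<times> 'r list) set" where
  "rect U V = {(zs, rs). (zs, []) \<in> U \<and> ([], rs) \<in> V}"

text \<open>A (two-sorted) structure on the sorts Z, R in the sense of van den Dries: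
D a b is the collection of definable (with parameters) subsets of Z^a x R^b.\<close>

definition two_sorted_structure ::
  "'z set \<Rightarrow> 'r set \<Rightarrow> (nat \<Rightarrow> nat \<Rightarrow> ('z list \<times> 'r list) set set) \<Rightarrow> bool" where
  "two_sorted_structure Z R D \<longleftrightarrow>
     (\<forall>a b. \<forall>A\<in>D a b. A \<subseteq> sp Z R a b) \<and>
     (\<forall>a b. sp Z R a b \<in> D a b) \<and>
     (\<forall>a b. \<forall>A\<in>D a b. \<forall>B\<in>D a b. A \<union> B \<in> D a b) \<and>
     (\<forall>a b. \<forall>A\<in>D a b. sp Z R a b - A \<in> D a b) \<and>
     (\<forall>a b c d. \<forall>A\<in>D a b. \<forall>B\<in>D c d.
        {(zs @ zs', rs @ rs') | zs rs zs' rs'. (zs, rs) \<in> A \<and> (zs', rs') \<in> B} \<in> D (a + c) (b + d)) \<and>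
     (\<forall>a b c d. \<forall>A\<in>D (a + c) (b + d). (\<lambda>(zs, rs). (take a zs, take b rs)) ` A \<in> D a b) \<and>
     (\<forall>a b p q. bij_betw p {..<a} {..<a} \<longrightarrow> bij_betw q {..<b} {..<b} \<longrightarrow>
        (\<forall>A\<in>D a b. (\<lambda>(zs, rs). (map (\<lambda>i. zs ! p i) [0..<a], map (\<lambda>j. rs ! q j) [0..<b])) ` A \<in> D a b)) \<and>
     {([z, z], []) | z. z \<in> Z} \<in> D 2 0 \<and>
     {([], [r, r]) | r. r \<in> R} \<in> D 0 2 \<and>
     (\<forall>z\<in>Z. {([z], [])} \<in> D 1 0) \<and>
     (\<forall>r\<in>R. {([], [r])} \<in> D 0 1)"

definition fully_orthogonal ::
  "'z set \<Rightarrow> 'r set \<Rightarrow> (nat \<Rightarrow> nat \<Rightarrow> ('z list \<times> 'r list) set set) \<Rightarrow> bool" where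
  "fully_orthogonal Z R D \<longleftrightarrow>
     (\<forall>a b. \<forall>A\<in>D a b. \<exists>F. finite F \<and> (\<forall>(U, V)\<in>F. U \<in> D a 0 \<and> V \<in> D 0 b) \<and>
        A = (\<Union>(U, V)\<in>F. rect U V))"

definition graph_on :: "('z list \<times> 'r list) set \<Rightarrow> ('z list \<times> 'r list \<Rightarrow> 'z list \<times> 'r list)
   \<Rightarrow> ('z list \<times> 'r list) set" where
  "graph_on X f = {(fst x @ fst (f x), snd x @ snd (f x)) | x. x \<in> X}"

definition definable_map ::
  "'z set \<Rightarrow> 'r set \<Rightarrow> (nat \<Rightarrow> nat \<Rightarrow> ('z list \<times> 'r list) set set) \<Rightarrow> nat \<Rightarrow> nat \<Rightarrow> nat \<Rightarrow> nat
   \<Rightarrow> ('z list \<times> 'r list) set \<Rightarrow> ('z list \<times> 'r list \<Rightarrow> 'z list \<times> 'r list) \<Rightarrow> bool" where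
  "definable_map Z R D a b c d X f \<longleftrightarrow>
     X \<subseteq> sp Z R a b \<and> (\<forall>x\<in>X. f x \<in> sp Z R c d) \<and> graph_on X f \<in> D (a + c) (b + d)"

definition Z_internal ::
  "'z set \<Rightarrow> 'r set \<Rightarrow> (nat \<Rightarrow> nat \<Rightarrow> ('z list \<times> 'r list) set set) \<Rightarrow> nat \<Rightarrow> nat
   \<Rightarrow> ('z list \<times> 'r list) set \<Rightarrow> bool" where
  "Z_internal Z R D a b X \<longleftrightarrow>
     (\<exists>k f. definable_map Z R D k 0 a b (sp Z R k 0) f \<and> f ` sp Z R k 0 = X)"

end

theory Submission
  imports Defs
begin

text \<open>
  (1) \<Rightarrow> (2): the graph of a definable surjection from Z^k onto X is a definable set whose
  Z-coordinates determine its R-coordinates. By full orthogonality it is a finite union of boxes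
  U \<times> V, and a box inside such a set carries a single R-value, so X has only finitely many R-parts.

  (2) \<Rightarrow> (3): as Z is infinite, the finitely many R-parts r of points of X can be coded
  injectively by elements c r of Z. The map (zs, r) \<mapsto> zs @ [c r] is definable on each fibre
  {x \<in> X. snd x = r}, whose graph is obtained from X by duplicating Z-coordinates, and hence
  on their finite union X.

  (3) \<Rightarrow> (1): the inverse of a definable injection into Z^(m+1) is definable (its graph is a
  coordinate permutation of the original graph); extended by a constant outside the image, it
  is a definable surjection from Z^(m+1) onto X.
\<close>

definition concat_prod ::
  "('z list \<times> 'r list) set \<Rightarrow> ('z list \<times> 'r list) set \<Rightarrow> ('z list \<times> 'r list) set" where
  "concat_prod A B = {(zs @ zs', rs @ rs') | zs rs zs' rs'. (zs, rs) \<in> A \<and> (zs', rs') \<in> B}"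

lemma concat_prod_eq_image:
  "concat_prod A B = (\<lambda>(x, y). (fst x @ fst y, snd x @ snd y)) ` (A \<times> B)"
proof (intro equalityI subsetI)
  fix w assume "w \<in> concat_prod A B"
  then obtain zs rs zs' rs' where "w = (zs @ zs', rs @ rs')" "(zs, rs) \<in> A" "(zs', rs') \<in> B"
    unfolding concat_prod_def by blast
  then show "w \<in> (\<lambda>(x, y). (fst x @ fst y, snd x @ snd y)) ` (A \<times> B)"
    by (auto intro!: image_eqI[of _ _ "((zs, rs), (zs', rs'))"])
next
  fix w assume "w \<in> (\<lambda>(x, y). (fst x @ fst y, snd x @ snd y)) ` (A \<times> B)"
  then obtain zs rs zs' rs' where "w = (zs @ zs', rs @ rs')" "(zs, rs) \<in> A" "(zs', rs') \<in> B"
    by auto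
  then show "w \<in> concat_prod A B"
    unfolding concat_prod_def by blast
qed

lemma concat_prod_singleton_right:
  "concat_prod A {y} = (\<lambda>x. (fst x @ fst y, snd x @ snd y)) ` A"
  by (auto simp: concat_prod_eq_image)

lemma concat_prod_singletons: "concat_prod {x} {y} = {(fst x @ fst y, snd x @ snd y)}"
  by (simp add: concat_prod_singleton_right)

lemma mem_sp: "(zs, rs) \<in> sp Z R a b \<longleftrightarrow> length zs = a \<and> set zs \<subseteq> Z \<and> length rs = b \<and> set rs \<subseteq> R"
  by (simp add: sp_def)

lemma sp_0_0: "sp Z R 0 0 = {([], [])}"
  by (auto simp: sp_def)

lemma graph_on_eq_image: "graph_on X f = (\<lambda>x. (fst x @ fst (f x), snd x @ snd (f x))) ` X"
  unfolding graph_on_def by blast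

lemma graph_on_UN: "graph_on (\<Union>i\<in>I. X i) f = (\<Union>i\<in>I. graph_on (X i) f)"
  unfolding graph_on_eq_image by blast

lemma definable_map_cong:
  "(\<And>x. x \<in> X \<Longrightarrow> f x = g x) \<Longrightarrow> definable_map Z R D a b c d X f = definable_map Z R D a b c d X g"
  unfolding definable_map_def graph_on_eq_image by (metis (no_types, lifting) image_cong)

lemma bij_betw_rotation: "bij_betw (\<lambda>i. (i + k) mod n) {..<n} {..<n::nat}"
proof -
  have "inj_on (\<lambda>i. (i + k) mod n) {..<n}"
  proof (rule inj_onI)
    fix i j assume "i \<in> {..<n}" "j \<in> {..<n}" "(i + k) mod n = (j + k) mod n"
    moreover from this(3) have "i mod n = j mod n"
      by (simp add: nat_mod_eq_iff)
    ultimately show "i = j" by simp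
  qed
  then show ?thesis
    by (simp add: bij_betw_def endo_inj_surj image_subset_iff)
qed

lemma map_nth_rotation: "length xs = n \<Longrightarrow> map (\<lambda>i. xs ! ((i + k) mod n)) [0..<n] = rotate k xs"
  by (rule nth_equalityI) (auto simp: nth_rotate add.commute)

text \<open>If length zs = a, then position i of (z # zs) @ (z # zs) holds the entry at position
  double_cons_index a i of [z, z] @ zs @ zs.\<close>

definition double_cons_index :: "nat \<Rightarrow> nat \<Rightarrow> nat" where
  "double_cons_index a i = (if i = 0 then 0 else if i \<le> a then i + 1 else if i = a + 1 then 1 else i)"

lemma bij_betw_double_cons_index:
  "bij_betw (double_cons_index a) {..<2 + (a + a)} {..<2 + (a + a)}"
proof -
  have "inj_on (double_cons_index a) {..<2 + (a + a)}"
    by (rule inj_onI) (auto simp: double_cons_index_def split: if_splits)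
  then show ?thesis
    by (intro bij_betw_imageI endo_inj_surj) (auto simp: double_cons_index_def)
qed

lemma map_nth_double_cons_index:
  assumes a: "length zs = a"
  shows "map (\<lambda>i. ([z, z] @ zs @ zs) ! double_cons_index a i) [0..<2 + (a + a)] = (z # zs) @ (z # zs)"
proof (rule nth_equalityI)
  fix i assume "i < length (map (\<lambda>i. ([z, z] @ zs @ zs) ! double_cons_index a i) [0..<2 + (a + a)])"
  then have i: "i < 2 + (a + a)" by simp
  have "i = 0 \<or> (i = Suc (i - 1) \<and> i - 1 < a) \<or> i = a + 1 \<or>
        (i = Suc (Suc (a + (i - a - 2))) \<and> i - a - 2 < a)"
    using i by arith
  then consider "i = 0" | j where "i = Suc j" "j < a" | "i = a + 1" | j where "i = Suc (Suc (a + j))" "j < a"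
    by blast
  then show "map (\<lambda>i. ([z, z] @ zs @ zs) ! double_cons_index a i) [0..<2 + (a + a)] ! i =
      ((z # zs) @ (z # zs)) ! i"
    using i a by cases (simp_all del: upt_Suc add: nth_append double_cons_index_def)
qed (simp add: a)

lemma lists_length_Suc_eq_image:
  "{zs. length zs = Suc a \<and> set zs \<subseteq> Z} = (\<lambda>(z, zs). z # zs) ` (Z \<times> {zs. length zs = a \<and> set zs \<subseteq> Z})"
  by (force simp: length_Suc_conv)

lemma finite_if_subsingleton:
  assumes "\<And>x y. x \<in> S \<Longrightarrow> y \<in> S \<Longrightarrow> x = y"
  shows "finite S"
proof (cases "S = {}")
  case False
  then obtain x where "x \<in> S" by blast
  with assms have "S = {x}" by blast
  then show ?thesis by simp
qed simp

lemma finite_R_projection_if_functional: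
  assumes FO: "fully_orthogonal Z R D" and G: "G \<in> D a b"
    and functional: "\<And>u r r'. (u, r) \<in> G \<Longrightarrow> (u, r') \<in> G \<Longrightarrow> r = r'"
  shows "finite (snd ` G)"
proof -
  obtain F where F: "finite F" "G = (\<Union>(U, V)\<in>F. rect U V)"
    using FO[unfolded fully_orthogonal_def, rule_format, OF G] by blast
  have "finite (snd ` rect U V)" if "(U, V) \<in> F" for U V
  proof (rule finite_if_subsingleton)
    have sub: "rect U V \<subseteq> G"
      unfolding F(2) using that by blast
    fix r r' assume "r \<in> snd ` rect U V" "r' \<in> snd ` rect U V"
    then obtain u u' where "(u, r) \<in> rect U V" "(u', r') \<in> rect U V"
      by auto
    then have "(u, r) \<in> rect U V" "(u, r') \<in> rect U V"
      unfolding rect_def by simp_all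
    then show "r = r'"
      using sub functional by blast
  qed
  moreover have "snd ` G = (\<Union>(U, V)\<in>F. snd ` rect U V)"
    unfolding F(2) by (simp add: image_UN split_def)
  ultimately show ?thesis
    using F(1) by (simp add: split_def)
qed

definition permute_Z :: "(nat \<Rightarrow> nat) \<Rightarrow> nat \<Rightarrow> 'z list \<times> 'r list \<Rightarrow> 'z list \<times> 'r list" where
  "permute_Z p a = (\<lambda>(zs, rs). (map (\<lambda>i. zs ! p i) [0..<a], rs))"

locale two_sorted =
  fixes Z :: "'z set" and R :: "'r set" and D :: "nat \<Rightarrow> nat \<Rightarrow> ('z list \<times> 'r list) set set"
  assumes definable_subset_sp: "A \<in> D a b \<Longrightarrow> A \<subseteq> sp Z R a b"
    and definable_sp: "sp Z R a b \<in> D a b"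
    and definable_Un: "A \<in> D a b \<Longrightarrow> B \<in> D a b \<Longrightarrow> A \<union> B \<in> D a b"
    and definable_sp_Diff: "A \<in> D a b \<Longrightarrow> sp Z R a b - A \<in> D a b"
    and definable_concat_prod: "A \<in> D a b \<Longrightarrow> B \<in> D c d \<Longrightarrow> concat_prod A B \<in> D (a + c) (b + d)"
    and definable_take: "A \<in> D (a + c) (b + d) \<Longrightarrow> (\<lambda>(zs, rs). (take a zs, take b rs)) ` A \<in> D a b"
    and definable_permute:
      "bij_betw p {..<a} {..<a} \<Longrightarrow> bij_betw q {..<b} {..<b} \<Longrightarrow> A \<in> D a b \<Longrightarrow>
       (\<lambda>(zs, rs). (map (\<lambda>i. zs ! p i) [0..<a], map (\<lambda>j. rs ! q j) [0..<b])) ` A \<in> D a b"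
    and definable_eq_Z: "{([z, z], []) | z. z \<in> Z} \<in> D 2 0"
    and definable_Z_singleton: "z \<in> Z \<Longrightarrow> {([z], [])} \<in> D 1 0"
    and definable_R_singleton: "r \<in> R \<Longrightarrow> {([], [r])} \<in> D 0 1"

lemma two_sorted_if_two_sorted_structure:
  "two_sorted_structure Z R D \<Longrightarrow> two_sorted Z R D"
  unfolding two_sorted_structure_def two_sorted_def concat_prod_def by (simp add: Ball_def)

context two_sorted
begin

lemma definable_mem_sp:
  "A \<in> D a b \<Longrightarrow> (zs, rs) \<in> A \<Longrightarrow> length zs = a \<and> set zs \<subseteq> Z \<and> length rs = b \<and> set rs \<subseteq> R"
  using definable_subset_sp mem_sp by blast

lemma definable_Int: "A \<in> D a b \<Longrightarrow> B \<in> D a b \<Longrightarrow> A \<inter> B \<in> D a b"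
proof -
  assume "A \<in> D a b" "B \<in> D a b"
  moreover from this have "A \<inter> B = sp Z R a b - ((sp Z R a b - A) \<union> (sp Z R a b - B))"
    using definable_subset_sp by blast
  ultimately show ?thesis
    by (simp add: definable_sp_Diff definable_Un)
qed

lemma definable_empty: "{} \<in> D a b"
  using definable_sp_Diff[OF definable_sp] by simp

lemma definable_UN: "finite I \<Longrightarrow> (\<And>i. i \<in> I \<Longrightarrow> A i \<in> D a b) \<Longrightarrow> (\<Union>i\<in>I. A i) \<in> D a b"
  by (induction I rule: finite_induct) (auto simp: definable_empty definable_Un)

lemma definable_Z_point: "set zs \<subseteq> Z \<Longrightarrow> {(zs, [])} \<in> D (length zs) 0"
proof (induction zs)
  case Nil
  then show ?case using definable_sp[of 0 0] by (simp add: sp_0_0)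
next
  case (Cons z zs)
  then have "concat_prod {([z], [])} {(zs, [])} \<in> D (1 + length zs) (0 + 0)"
    by (intro definable_concat_prod definable_Z_singleton) auto
  then show ?case by (simp add: concat_prod_singletons)
qed

lemma definable_R_point: "set rs \<subseteq> R \<Longrightarrow> {([], rs)} \<in> D 0 (length rs)"
proof (induction rs)
  case Nil
  then show ?case using definable_sp[of 0 0] by (simp add: sp_0_0)
next
  case (Cons r rs)
  then have "concat_prod {([], [r])} {([], rs)} \<in> D (0 + 0) (1 + length rs)"
    by (intro definable_concat_prod definable_R_singleton) auto
  then show ?case by (simp add: concat_prod_singletons)
qed

lemma definable_point: "x \<in> sp Z R a b \<Longrightarrow> {x} \<in> D a b"
proof (cases x)
  case (Pair zs rs)
  assume "x \<in> sp Z R a b"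
  with Pair have "set zs \<subseteq> Z" "set rs \<subseteq> R" "length zs = a" "length rs = b"
    by (simp_all add: mem_sp)
  then have "concat_prod {(zs, [])} {([], rs)} \<in> D (a + 0) (0 + b)"
    using definable_concat_prod[OF definable_Z_point definable_R_point] by blast
  with Pair show ?thesis
    by (simp add: concat_prod_singletons)
qed

lemma definable_rotate: "A \<in> D a b \<Longrightarrow> (\<lambda>(zs, rs). (rotate k zs, rotate l rs)) ` A \<in> D a b"
proof -
  assume A: "A \<in> D a b"
  have "(\<lambda>(zs, rs). (rotate k zs, rotate l rs)) ` A =
        (\<lambda>(zs, rs). (map (\<lambda>i. zs ! ((i + k) mod a)) [0..<a], map (\<lambda>j. rs ! ((j + l) mod b)) [0..<b])) ` A"
    using definable_subset_sp[OF A] by (intro image_cong) (auto simp: mem_sp map_nth_rotation)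
  then show ?thesis
    using definable_permute[OF bij_betw_rotation bij_betw_rotation A] by simp
qed

lemma definable_permute_Z:
  assumes p: "bij_betw p {..<a} {..<a}" and A: "A \<in> D a b"
  shows "permute_Z p a ` A \<in> D a b"
proof -
  have "permute_Z p a ` A = (\<lambda>(zs, rs). (map (\<lambda>i. zs ! p i) [0..<a], map (\<lambda>j. rs ! j) [0..<b])) ` A"
    unfolding permute_Z_def
  proof (rule image_cong[OF refl])
    fix x assume "x \<in> A"
    then obtain zs rs where "x = (zs, rs)" "length rs = b"
      by (cases x) (auto dest: definable_mem_sp[OF A])
    then show "(case x of (zs, rs) \<Rightarrow> (map (\<lambda>i. zs ! p i) [0..<a], rs)) =
        (case x of (zs, rs) \<Rightarrow> (map (\<lambda>i. zs ! p i) [0..<a], map (\<lambda>j. rs ! j) [0..<b]))"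
      using map_nth[of rs] by simp
  qed
  moreover have "bij_betw (\<lambda>j. j) {..<b} {..<b}"
    by (simp add: bij_betw_def)
  ultimately show ?thesis
    using definable_permute[OF p _ A] by simp
qed

lemma definable_R_fibre:
  assumes X: "X \<in> D a b"
  shows "{x \<in> X. snd x = rs} \<in> D a b"
proof (cases "rs \<in> snd ` X")
  case True
  then obtain x where "x \<in> sp Z R a b" "rs = snd x"
    using definable_subset_sp[OF X] by blast
  then have "([], rs) \<in> sp Z R 0 b"
    by (cases x) (simp add: mem_sp)
  then have "concat_prod (sp Z R a 0) {([], rs)} \<in> D (a + 0) (0 + b)"
    by (intro definable_concat_prod definable_sp definable_point)
  moreover have "{x \<in> X. snd x = rs} = X \<inter> concat_prod (sp Z R a 0) {([], rs)}"
  proof (intro equalityI subsetI)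
    fix x assume "x \<in> {x \<in> X. snd x = rs}"
    moreover from this have "(fst x, []) \<in> sp Z R a 0"
      by (cases x) (auto simp: mem_sp dest: definable_mem_sp[OF X])
    ultimately show "x \<in> X \<inter> concat_prod (sp Z R a 0) {([], rs)}"
      unfolding concat_prod_singleton_right by (auto intro: image_eqI[of _ _ "(fst x, [])"])
  qed (auto simp: concat_prod_singleton_right sp_def)
  ultimately show ?thesis
    using definable_Int[OF X] by simp
next
  case False
  then have "{x \<in> X. snd x = rs} = {}" by (auto simp: image_iff)
  then show ?thesis by (metis definable_empty)
qed

lemma definable_Z_diagonal: "(\<lambda>zs. (zs @ zs, [])) ` {zs. length zs = a \<and> set zs \<subseteq> Z} \<in> D (a + a) 0"
proof (induction a)
  case 0
  have "(\<lambda>zs. (zs @ zs, [])) ` {zs. length zs = 0 \<and> set zs \<subseteq> Z} = sp Z R 0 0"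
    by (auto simp: sp_0_0)
  then show ?case using definable_sp by simp
next
  case (Suc a)
  define perm :: "'z list \<times> 'r list \<Rightarrow> 'z list \<times> 'r list" where
    "perm = permute_Z (double_cons_index a) (2 + (a + a))"
  let ?L = "{zs. length zs = a \<and> set zs \<subseteq> Z}"
  let ?P = "concat_prod {([z, z], []) | z. z \<in> Z} ((\<lambda>zs. (zs @ zs, [])) ` ?L)"
  have "?P \<in> D (2 + (a + a)) 0"
    using definable_concat_prod[OF definable_eq_Z Suc] by (simp only: add_0)
  then have definable: "perm ` ?P \<in> D (2 + (a + a)) 0"
    unfolding perm_def by (rule definable_permute_Z[OF bij_betw_double_cons_index])
  have perm: "perm ([z, z] @ zs @ zs, []) = ((z # zs) @ (z # zs), [])" if "length zs = a" for z zs
    unfolding perm_def permute_Z_def prod.case map_nth_double_cons_index[OF that] ..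
  have P: "?P = (\<lambda>(z, zs). ([z, z] @ zs @ zs, [])) ` (Z \<times> ?L)"
    unfolding concat_prod_eq_image by force
  have "perm ` ?P = (\<lambda>x. perm (case x of (z, zs) \<Rightarrow> ([z, z] @ zs @ zs, []))) ` (Z \<times> ?L)"
    unfolding P image_image ..
  also have "\<dots> = (\<lambda>(z, zs). ((z # zs) @ (z # zs), [])) ` (Z \<times> ?L)"
  proof (rule image_cong[OF refl])
    fix x assume "x \<in> Z \<times> ?L"
    then obtain z zs where "x = (z, zs)" "length zs = a" by blast
    then show "perm (case x of (z, zs) \<Rightarrow> ([z, z] @ zs @ zs, [])) =
        (case x of (z, zs) \<Rightarrow> ((z # zs) @ (z # zs), []))"
      using perm by simp
  qed
  also have "\<dots> = (\<lambda>zs. (zs @ zs, [])) ` {zs. length zs = Suc a \<and> set zs \<subseteq> Z}"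
    unfolding lists_length_Suc_eq_image image_image by (rule image_cong) auto
  finally have permuted: "perm ` ?P = (\<lambda>zs. (zs @ zs, [])) ` {zs. length zs = Suc a \<and> set zs \<subseteq> Z}" .
  have dim: "Suc a + Suc a = 2 + (a + a)" by simp
  show ?case
    using definable unfolding permuted dim .
qed

lemma definable_duplicate_Z:
  assumes A: "A \<in> D a b"
  shows "(\<lambda>(zs, rs). (zs @ zs, rs)) ` A \<in> D (a + a) b"
proof -
  let ?Diag = "(\<lambda>zs. (zs @ zs, [])) ` {zs. length zs = a \<and> set zs \<subseteq> Z}"
  have "concat_prod A (sp Z R a 0) \<in> D (a + a) (b + 0)"
    by (intro definable_concat_prod A definable_sp)
  moreover have "concat_prod ?Diag (sp Z R 0 b) \<in> D (a + a + 0) (0 + b)"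
    by (intro definable_concat_prod definable_Z_diagonal definable_sp)
  moreover have "(\<lambda>(zs, rs). (zs @ zs, rs)) ` A = concat_prod A (sp Z R a 0) \<inter> concat_prod ?Diag (sp Z R 0 b)"
  proof (intro equalityI subsetI)
    fix w assume "w \<in> (\<lambda>(zs, rs). (zs @ zs, rs)) ` A"
    then obtain zs rs where w: "w = (zs @ zs, rs)" "(zs, rs) \<in> A" by auto
    then have "length zs = a" "set zs \<subseteq> Z" "length rs = b" "set rs \<subseteq> R"
      using definable_mem_sp[OF A] by simp_all
    with w show "w \<in> concat_prod A (sp Z R a 0) \<inter> concat_prod ?Diag (sp Z R 0 b)"
      unfolding concat_prod_def by (auto simp: mem_sp)
  next
    fix w assume "w \<in> concat_prod A (sp Z R a 0) \<inter> concat_prod ?Diag (sp Z R 0 b)"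
    then obtain zs rs zs' vs rs' where
      w: "w = (zs @ zs', rs)" "(zs, rs) \<in> A" "length zs' = a" and
      w': "w = (vs @ vs, rs')" "length vs = a"
      unfolding concat_prod_def by (auto simp: mem_sp)
    have "length zs = a"
      using definable_mem_sp[OF A w(2)] by simp
    moreover have "zs @ zs' = vs @ vs"
      using w(1) w'(1) by simp
    ultimately have "zs = vs \<and> zs' = vs"
      using w'(2) by (simp add: append_eq_append_conv)
    then have "zs' = zs" by simp
    with w show "w \<in> (\<lambda>(zs, rs). (zs @ zs, rs)) ` A" by auto
  qed
  ultimately show ?thesis
    using definable_Int by simp
qed

lemma definable_map_domain:
  assumes f: "definable_map Z R D a b c d X f"
  shows "X \<in> D a b"
proof -
  have X: "X \<subseteq> sp Z R a b" and G: "graph_on X f \<in> D (a + c) (b + d)"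
    using f unfolding definable_map_def by blast+
  have "(\<lambda>(zs, rs). (take a zs, take b rs)) ` graph_on X f = (\<lambda>x. x) ` X"
    unfolding graph_on_eq_image image_image
  proof (rule image_cong[OF refl])
    fix x assume "x \<in> X"
    then show "(case (fst x @ fst (f x), snd x @ snd (f x)) of (zs, rs) \<Rightarrow> (take a zs, take b rs)) = x"
      using X by (cases x) (auto simp: mem_sp)
  qed
  then show ?thesis
    using definable_take[OF G] by simp
qed

lemma definable_map_inverse:
  assumes f: "definable_map Z R D a b c d X f" and inj: "inj_on f X"
  shows "definable_map Z R D c d a b (f ` X) (inv_into X f)"
proof -
  have X: "X \<subseteq> sp Z R a b" and fX: "\<forall>x\<in>X. f x \<in> sp Z R c d"
    and G: "graph_on X f \<in> D (a + c) (b + d)"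
    using f unfolding definable_map_def by blast+
  have "graph_on (f ` X) (inv_into X f) = (\<lambda>x. (fst (f x) @ fst x, snd (f x) @ snd x)) ` X"
    unfolding graph_on_eq_image image_image using inj by (intro image_cong) auto
  also have "\<dots> = (\<lambda>(zs, rs). (rotate a zs, rotate b rs)) ` graph_on X f"
    unfolding graph_on_eq_image image_image
  proof (rule image_cong[OF refl])
    fix x assume "x \<in> X"
    then have "length (fst x) = a" "length (snd x) = b"
      using X by (cases x, auto simp: mem_sp)+
    then show "(fst (f x) @ fst x, snd (f x) @ snd x) =
        (case (fst x @ fst (f x), snd x @ snd (f x)) of (zs, rs) \<Rightarrow> (rotate a zs, rotate b rs))"
      by (metis case_prod_conv rotate_append)
  qed
  finally have "graph_on (f ` X) (inv_into X f) \<in> D (c + a) (d + b)"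
    using definable_rotate[OF G] by (simp add: add.commute)
  moreover have "f ` X \<subseteq> sp Z R c d"
    using fX by blast
  moreover have "inv_into X f y \<in> sp Z R a b" if "y \<in> f ` X" for y
    using X inv_into_into[OF that] by blast
  ultimately show ?thesis
    unfolding definable_map_def by blast
qed

lemma definable_image_if_inj_on:
  "definable_map Z R D a b c d X f \<Longrightarrow> inj_on f X \<Longrightarrow> f ` X \<in> D c d"
  by (rule definable_map_domain[OF definable_map_inverse])

lemma definable_map_UN:
  assumes "finite I" and "\<And>i. i \<in> I \<Longrightarrow> definable_map Z R D a b c d (X i) f"
  shows "definable_map Z R D a b c d (\<Union>i\<in>I. X i) f"
proof -
  have "graph_on (\<Union>i\<in>I. X i) f \<in> D (a + c) (b + d)"
    unfolding graph_on_UN using assms by (intro definable_UN) (auto simp: definable_map_def)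
  then show ?thesis
    using assms(2) unfolding definable_map_def by blast
qed

lemma definable_map_append_Z_constant:
  assumes A: "A \<in> D a b" and us: "set us \<subseteq> Z"
  shows "definable_map Z R D a b (a + length us) 0 A (\<lambda>x. (fst x @ us, []))"
proof -
  have "graph_on A (\<lambda>x. (fst x @ us, [])) = concat_prod ((\<lambda>(zs, rs). (zs @ zs, rs)) ` A) {(us, [])}"
    unfolding graph_on_eq_image concat_prod_singleton_right image_image by (intro image_cong) auto
  moreover have "concat_prod ((\<lambda>(zs, rs). (zs @ zs, rs)) ` A) {(us, [])} \<in> D (a + a + length us) (b + 0)"
    by (intro definable_concat_prod definable_duplicate_Z A definable_Z_point us)
  moreover have "\<forall>x\<in>A. (fst x @ us, []) \<in> sp Z R (a + length us) 0"
    using us by (auto simp: mem_sp dest!: definable_mem_sp[OF A])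
  ultimately show ?thesis
    unfolding definable_map_def using definable_subset_sp[OF A] by (simp add: add.assoc)
qed

lemma Z_internal_if_definable_surjection:
  assumes g: "definable_map Z R D k 0 a b Y g" and onto: "g ` Y = X" and "X \<noteq> {}"
  shows "Z_internal Z R D a b X"
proof -
  obtain x0 where x0: "x0 \<in> X" using \<open>X \<noteq> {}\<close> by blast
  define h where "h y = (if y \<in> Y then g y else x0)" for y
  have Ysp: "Y \<subseteq> sp Z R k 0" and gsp: "\<forall>y\<in>Y. g y \<in> sp Z R a b"
    and G: "graph_on Y g \<in> D (k + a) (0 + b)"
    using g unfolding definable_map_def by blast+
  have "x0 \<in> sp Z R a b" using x0 onto gsp by blast
  then have "concat_prod (sp Z R k 0 - Y) {x0} \<in> D (k + a) (0 + b)"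
    by (intro definable_concat_prod definable_sp_Diff definable_map_domain[OF g] definable_point)
  moreover have "graph_on (sp Z R k 0) h = graph_on Y g \<union> concat_prod (sp Z R k 0 - Y) {x0}"
  proof -
    have "sp Z R k 0 = Y \<union> (sp Z R k 0 - Y)" using Ysp by blast
    then have "graph_on (sp Z R k 0) h = graph_on Y h \<union> graph_on (sp Z R k 0 - Y) h"
      unfolding graph_on_eq_image by (metis image_Un)
    also have "graph_on Y h = graph_on Y g"
      unfolding graph_on_eq_image h_def by simp
    also have "graph_on (sp Z R k 0 - Y) h = concat_prod (sp Z R k 0 - Y) {x0}"
      unfolding graph_on_eq_image concat_prod_singleton_right h_def by simp
    finally show ?thesis .
  qed
  moreover have "\<forall>y\<in>sp Z R k 0. h y \<in> sp Z R a b"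
    using gsp \<open>x0 \<in> sp Z R a b\<close> by (simp add: h_def)
  ultimately have "definable_map Z R D k 0 a b (sp Z R k 0) h"
    unfolding definable_map_def using G by (simp add: definable_Un)
  moreover have "h ` sp Z R k 0 = X"
  proof
    show "h ` sp Z R k 0 \<subseteq> X" using onto x0 by (auto simp: h_def)
    show "X \<subseteq> h ` sp Z R k 0" using onto Ysp by (force simp: h_def)
  qed
  ultimately show ?thesis
    unfolding Z_internal_def by blast
qed

lemma Z_internal_if_definable_injection:
  assumes "definable_map Z R D a b k 0 X f" and "inj_on f X" and "X \<noteq> {}"
  shows "Z_internal Z R D a b X"
  using Z_internal_if_definable_surjection[OF definable_map_inverse[OF assms(1,2)]] assms(2,3)
  by (simp add: inv_into_image_cancel)

lemma finite_R_projection_if_Z_internal: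
  assumes FO: "fully_orthogonal Z R D" and "Z_internal Z R D a b X"
  shows "finite (snd ` X)"
proof -
  obtain k g where g: "definable_map Z R D k 0 a b (sp Z R k 0) g" and onto: "g ` sp Z R k 0 = X"
    using \<open>Z_internal Z R D a b X\<close> unfolding Z_internal_def by blast
  let ?G = "graph_on (sp Z R k 0) g"
  have "finite (snd ` ?G)"
  proof (rule finite_R_projection_if_functional[OF FO])
    show "?G \<in> D (k + a) (0 + b)"
      using g unfolding definable_map_def by blast
  next
    fix u r r' assume "(u, r) \<in> ?G" "(u, r') \<in> ?G"
    then obtain y y' where y: "y \<in> sp Z R k 0" "u = fst y @ fst (g y)" "r = snd y @ snd (g y)"
      and y': "y' \<in> sp Z R k 0" "u = fst y' @ fst (g y')" "r' = snd y' @ snd (g y')"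
      unfolding graph_on_def by auto
    have "length (fst y) = k" "length (fst y') = k" "snd y = []" "snd y' = []"
      using y(1) y'(1) by (auto simp: sp_def)
    with y(2) y'(2) have "y = y'"
      by (simp add: prod_eq_iff append_eq_append_conv)
    with y y' show "r = r'" by simp
  qed
  moreover have "snd ` ?G = snd ` X"
  proof -
    have "snd ` ?G = (\<lambda>y. snd (g y)) ` sp Z R k 0"
      unfolding graph_on_eq_image image_image by (rule image_cong) (auto simp: sp_def)
    then show ?thesis
      unfolding onto[symmetric] image_image .
  qed
  ultimately show ?thesis by simp
qed

lemma definable_injection_into_Z_if_finite_R_projection:
  assumes "infinite Z" and X: "X \<in> D a b" and "finite (snd ` X)"
  obtains f where "definable_map Z R D a b (a + 1) 0 X f" and "inj_on f X"
proof -
  obtain B where "B \<subseteq> Z" "finite B" "card B = card (snd ` X)"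
    using infinite_arbitrarily_large[OF \<open>infinite Z\<close>] by blast
  then obtain c where c: "c ` snd ` X \<subseteq> Z" "inj_on c (snd ` X)"
    using card_le_inj[OF \<open>finite (snd ` X)\<close> \<open>finite B\<close>] by (metis order_refl order_trans)
  define f where "f x = (fst x @ [c (snd x)], [] :: 'r list)" for x
  have "definable_map Z R D a b (a + 1) 0 {x \<in> X. snd x = rs} f" if "rs \<in> snd ` X" for rs
  proof -
    have "definable_map Z R D a b (a + length [c rs]) 0 {x \<in> X. snd x = rs} (\<lambda>x. (fst x @ [c rs], []))"
      using c(1) that by (intro definable_map_append_Z_constant definable_R_fibre X) auto
    then show ?thesis
      by (subst definable_map_cong[where g = "\<lambda>x. (fst x @ [c rs], [])"]) (auto simp: f_def)
  qed
  then have "definable_map Z R D a b (a + 1) 0 (\<Union>rs\<in>snd ` X. {x \<in> X. snd x = rs}) f"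
    using assms(3) by (rule definable_map_UN[rotated])
  moreover have "(\<Union>rs\<in>snd ` X. {x \<in> X. snd x = rs}) = X" by blast
  moreover have "inj_on f X"
  proof (rule inj_onI)
    fix x y assume "x \<in> X" "y \<in> X" "f x = f y"
    then show "x = y"
      using c(2) by (auto simp: f_def prod_eq_iff dest: inj_onD)
  qed
  ultimately show ?thesis
    using that by simp
qed

end

theorem proposition2p3:
  fixes Z :: "'z set" and R :: "'r set"
    and D :: "nat \<Rightarrow> nat \<Rightarrow> ('z list \<times> 'r list) set set"
    and m n :: nat and X :: "('z list \<times> 'r list) set"
  assumes "two_sorted_structure Z R D"
    and "fully_orthogonal Z R D"
    and "infinite Z"
    and "X \<in> D m n"
    and "X \<noteq> {}"
  shows "(Z_internal Z R D m n X \<longleftrightarrow> finite (snd ` X)) \<and>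
         (finite (snd ` X) \<longleftrightarrow>
            (\<exists>f Y. Y \<in> D (m + 1) 0 \<and> definable_map Z R D m n (m + 1) 0 X f \<and> bij_betw f X Y))"
proof -
  interpret two_sorted Z R D
    using assms(1) by (rule two_sorted_if_two_sorted_structure)
  have internal_finite: "Z_internal Z R D m n X \<Longrightarrow> finite (snd ` X)"
    using assms(2) by (rule finite_R_projection_if_Z_internal)
  have finite_injection: "\<exists>f Y. Y \<in> D (m + 1) 0 \<and> definable_map Z R D m n (m + 1) 0 X f \<and> bij_betw f X Y"
    if fin: "finite (snd ` X)"
  proof -
    obtain f where f: "definable_map Z R D m n (m + 1) 0 X f" "inj_on f X"
      using definable_injection_into_Z_if_finite_R_projection[OF assms(3,4) fin] .
    then have "f ` X \<in> D (m + 1) 0"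
      by (rule definable_image_if_inj_on)
    with f show ?thesis
      unfolding bij_betw_def by blast
  qed
  have injection_internal: "Z_internal Z R D m n X"
    if "\<exists>f Y. Y \<in> D (m + 1) 0 \<and> definable_map Z R D m n (m + 1) 0 X f \<and> bij_betw f X Y"
    using that assms(5) Z_internal_if_definable_injection unfolding bij_betw_def by blast
  show ?thesis
    using internal_finite finite_injection injection_internal by blast
qed

end
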